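(* Let $X$ be a nonnegative random variable with support $(0,r)$, $r\in(0,+\infty]$, with expected value $\mathbb{E}[X]\in(0,+\infty)$ and finite CIGF. Then $$G_X(\alpha,\beta)=\sum_{n=0}^\infty\binom{\alpha}{n}(-1)^n(\mathbb{E}[X])^{n+\beta}\,\mathcal{IG}_{X_e}(n+\beta)\qquad\text{for all }(\alpha,\beta)\in D_X,$$ where $X_e$ is the equilibrium random variable of $X$.
   Context: For a random variable $X$ with CDF $F$ and survival function $\overline F=1-F$, with $l=\inf\{x:F(x)>0\}$, $r=\sup\{x:\overline F(x)>0\}$, the CIGF is $G_X(\alpha,\beta)=\int_l^r [F(x)]^\alpha[\overline F(x)]^\beta\,dx$ on $D_X=\{(\alpha,\beta)\in\mathbb{R}^2: G_X(\alpha,\beta)<\infty\}$. The generalized binomial coefficient is $\binom{\alpha}{n}=\alpha(\alpha-1)\cdots(\alpha-n+1)/n!$. The equilibrium random variable $X_e$ of $X$ is the absolutely continuous random variable with PDF $f_e(x)=\overline F(x)/\mathbb{E}[X]$, $x>0$. For an absolutely continuous random variable $Z$ with PDF $f$ on support $(0,r)$, Golomb's information generating function is $\mathcal{IG}_Z(\nu)=\int_0^r[f(x)]^\nu dx$. *)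

theory Defs
  imports "HOL-Probability.Probability"
begin

definition supp_left :: "(real \<Rightarrow> real) \<Rightarrow> ereal" where
  "supp_left F = Inf {ereal x | x. F x > 0}"

definition supp_right :: "(real \<Rightarrow> real) \<Rightarrow> ereal" where
  "supp_right F = Sup {ereal x | x. 1 - F x > 0}"

definition supp_interval :: "(real \<Rightarrow> real) \<Rightarrow> real set" where
  "supp_interval F = {x. supp_left F < ereal x \<and> ereal x < supp_right F}"

definition CIGF_dom :: "(real \<Rightarrow> real) \<Rightarrow> (real \<times> real) set" where
  "CIGF_dom F = {(a, b). (\<integral>\<^sup>+ x \<in> supp_interval F.
       ennreal (F x powr a * (1 - F x) powr b) \<partial>lborel) < \<infinity>}"

definition CIGF :: "(real \<Rightarrow> real) \<Rightarrow> real \<Rightarrow> real \<Rightarrow> real" where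
  "CIGF F a b = (LINT x : supp_interval F | lborel. F x powr a * (1 - F x) powr b)"

definition equilibrium_pdf :: "(real \<Rightarrow> real) \<Rightarrow> real \<Rightarrow> real \<Rightarrow> real" where
  "equilibrium_pdf F mu x = (if x > 0 then (1 - F x) / mu else 0)"

definition golomb_IG :: "(real \<Rightarrow> real) \<Rightarrow> ereal \<Rightarrow> real \<Rightarrow> real" where
  "golomb_IG f r \<nu> = (LINT x : {x. 0 < x \<and> ereal x < r} | lborel. f x powr \<nu>)"

end

(* On the support (0, r) the survival function u = 1 - F takes values in (0, 1), so the
   generalised binomial series F^alpha u^beta = (1 - u)^alpha u^beta
   = sum_n (alpha gchoose n) (-1)^n u^(n + beta) converges pointwise, while
   mu^(n + beta) IG_{X_e}(n + beta) is just the integral of u^(n + beta) over (0, r).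
   Termwise integration is justified because (alpha gchoose n) (-1)^n has constant sign
   once n > alpha: beyond finitely many terms the series is, up to a sign, one of
   nonnegative functions, dominated by the integrable remainder of the CIGF integrand.
   Each u^(n + beta) is integrable since it is bounded by a multiple of the CIGF integrand
   where F >= 1/2, and F < 1/2 only on a bounded part of (0, r). *)

theory Submission
  imports Defs
begin

lemma powr_le_two_powr_abs:
  fixes t e :: real
  assumes "1/2 \<le> t" "t \<le> 1"
  shows "t powr e \<le> 2 powr \<bar>e\<bar>"
proof (cases "e \<ge> 0")
  case True
  have "t powr e \<le> 1" using assms True by (intro powr_le1) auto
  also have "1 \<le> 2 powr \<bar>e\<bar>" by (rule ge_one_powr_ge_zero) auto
  finally show ?thesis .
next
  case False
  have "t powr e = (1/t) powr (-e)" using assms by (simp add: powr_minus_divide powr_divide)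
  also have "\<dots> \<le> 2 powr (-e)" using assms False by (intro powr_mono2) (auto simp: field_simps)
  finally show ?thesis using False by simp
qed

lemma one_le_two_powr_abs_mult_powr:
  fixes t a :: real
  assumes "1/2 \<le> t" "t \<le> 1"
  shows "1 \<le> 2 powr \<bar>a\<bar> * t powr a"
proof -
  have "1 / t powr a \<le> 2 powr \<bar>a\<bar>"
    using powr_le_two_powr_abs[OF assms, of "-a"] assms by (simp add: powr_minus_divide)
  then show ?thesis using assms by (simp add: field_simps)
qed

lemma gbinomial_alternating_eventually_sign:
  fixes \<alpha> :: real
  assumes "\<alpha> < real N"
  obtains s :: real where "s \<noteq> 0" "\<And>n. N \<le> n \<Longrightarrow> 0 \<le> s * ((\<alpha> gchoose n) * (-1) ^ n)"
proof
  define P where "P = pochhammer (-\<alpha>) N"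
  define s :: real where "s = (if 0 \<le> P then 1 else -1)"
  show "s \<noteq> 0" by (simp add: s_def)
  fix n assume "N \<le> n"
  have "(\<alpha> gchoose n) * (-1) ^ n = pochhammer (-\<alpha>) n / fact n"
    by (simp add: gbinomial_pochhammer flip: power_mult_distrib)
  also have "\<dots> = P * pochhammer (real N - \<alpha>) (n - N) / fact n"
    using \<open>N \<le> n\<close> by (simp add: P_def pochhammer_product[of N n] algebra_simps)
  finally have "s * ((\<alpha> gchoose n) * (-1) ^ n) = (s * P) * pochhammer (real N - \<alpha>) (n - N) / fact n"
    by simp
  moreover have "0 \<le> s * P" by (simp add: s_def)
  moreover have "0 < pochhammer (real N - \<alpha>) (n - N)" using assms by (intro pochhammer_pos) simp
  ultimately show "0 \<le> s * ((\<alpha> gchoose n) * (-1) ^ n)" by simp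
qed

lemma sums_integral_nonneg:
  fixes f :: "nat \<Rightarrow> 'a \<Rightarrow> real"
  assumes f_int: "\<And>n. integrable M (f n)" and nonneg: "\<And>n x. 0 \<le> f n x"
    and sums: "\<And>x. (\<lambda>n. f n x) sums g x" and g_int: "integrable M g"
  shows "(\<lambda>n. integral\<^sup>L M (f n)) sums integral\<^sup>L M g"
proof -
  have "(\<lambda>k. \<integral>x. (\<Sum>n<k. f n x) \<partial>M) \<longlonglongrightarrow> integral\<^sup>L M g"
  proof (rule integral_dominated_convergence)
    show "AE x in M. (\<lambda>k. \<Sum>n<k. f n x) \<longlonglongrightarrow> g x" using sums by (simp add: sums_def)
    show "AE x in M. norm (\<Sum>n<k. f n x) \<le> g x" for k
    proof (rule AE_I2)
      fix x
      have "(\<Sum>n<k. f n x) \<le> (\<Sum>n. f n x)"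
        using sums[of x] nonneg by (intro sum_le_suminf) (auto simp: sums_iff)
      also have "\<dots> = g x" using sums[of x] by (simp add: sums_iff)
      finally show "norm (\<Sum>n<k. f n x) \<le> g x" by (simp add: nonneg sum_nonneg)
    qed
  qed (use f_int g_int in auto)
  then show ?thesis using f_int by (simp add: sums_def)
qed

lemma sums_integral_eventually_sign:
  fixes f :: "nat \<Rightarrow> 'a \<Rightarrow> real"
  assumes f_int: "\<And>n. integrable M (f n)" and sums: "\<And>x. (\<lambda>n. f n x) sums g x"
    and g_int: "integrable M g" and "s \<noteq> 0" and sign: "\<And>n x. N \<le> n \<Longrightarrow> 0 \<le> s * f n x"
  shows "(\<lambda>n. integral\<^sup>L M (f n)) sums integral\<^sup>L M g"
proof -
  define T where "T x = g x - (\<Sum>n<N. f n x)" for x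
  have "(\<lambda>n. f (n + N) x) sums T x" for x
    using sums_iff_shift[of "\<lambda>n. f n x" N "T x"] sums[of x] by (simp add: T_def)
  then have "(\<lambda>n. s * f (n + N) x) sums (s * T x)" for x
    by (rule sums_mult)
  then have "(\<lambda>n. \<integral>x. s * f (n + N) x \<partial>M) sums (\<integral>x. s * T x \<partial>M)"
    using f_int g_int sign by (intro sums_integral_nonneg) (auto simp: T_def)
  then have "(\<lambda>n. s * integral\<^sup>L M (f (n + N))) sums (s * (integral\<^sup>L M g - (\<Sum>n<N. integral\<^sup>L M (f n))))"
    using f_int g_int by (simp add: T_def)
  then have "(\<lambda>n. integral\<^sup>L M (f (n + N))) sums (integral\<^sup>L M g - (\<Sum>n<N. integral\<^sup>L M (f n)))"
    using \<open>s \<noteq> 0\<close> by (simp add: sums_mult_iff)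
  then show ?thesis
    using sums_iff_shift[of "\<lambda>n. integral\<^sup>L M (f n)" N] by simp
qed

lemma mono_supp_interval_bounds:
  assumes "mono F" "x \<in> supp_interval F"
  shows "0 < F x" and "F x < 1"
proof -
  have "Inf {ereal x | x. F x > 0} < ereal x"
    using assms(2) by (simp add: supp_interval_def supp_left_def)
  then obtain y where "F y > 0" "y < x" by (auto simp: Inf_less_iff)
  then show "0 < F x" using monoD[OF assms(1), of y x] by simp
  have "ereal x < Sup {ereal x | x. 1 - F x > 0}"
    using assms(2) by (simp add: supp_interval_def supp_right_def)
  then obtain y where "F y < 1" "x < y" by (auto simp: less_Sup_iff)
  then show "F x < 1" using monoD[OF assms(1), of x y] by simp
qed

lemma bdd_below_supp_interval:
  assumes "supp_left F \<noteq> -\<infinity>"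
  shows "bdd_below (supp_interval F)"
proof (cases "supp_left F")
  case (real a)
  then have "a \<le> x" if "x \<in> supp_interval F" for x
    using that by (simp add: supp_interval_def)
  then show ?thesis by (rule bdd_belowI)
qed (use assms in \<open>auto simp: supp_interval_def\<close>)

lemma sets_supp_interval [measurable]: "supp_interval F \<in> sets borel"
  unfolding supp_interval_def by measurable

lemma set_integrable_CIGF_dom:
  assumes [measurable]: "F \<in> borel_measurable borel" and "(\<alpha>, \<beta>) \<in> CIGF_dom F"
  shows "set_integrable lborel (supp_interval F) (\<lambda>x. F x powr \<alpha> * (1 - F x) powr \<beta>)"
  unfolding set_integrable_def
proof (rule integrableI_nonneg)
  have "(\<integral>\<^sup>+ x. ennreal (indicator (supp_interval F) x *\<^sub>R (F x powr \<alpha> * (1 - F x) powr \<beta>)) \<partial>lborel)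
      = (\<integral>\<^sup>+ x \<in> supp_interval F. ennreal (F x powr \<alpha> * (1 - F x) powr \<beta>) \<partial>lborel)"
    by (intro nn_integral_cong) (simp split: split_indicator)
  then show "(\<integral>\<^sup>+ x. ennreal (indicator (supp_interval F) x *\<^sub>R (F x powr \<alpha> * (1 - F x) powr \<beta>)) \<partial>lborel) < \<infinity>"
    using assms(2) by (simp add: CIGF_dom_def)
qed auto

lemma gen_binomial_real_complement:
  fixes u \<alpha> \<beta> :: real
  assumes "0 < u" "u < 1"
  shows "(\<lambda>n. (\<alpha> gchoose n) * (-1) ^ n * u powr (real n + \<beta>)) sums ((1 - u) powr \<alpha> * u powr \<beta>)"
proof -
  have "(\<lambda>n. (\<alpha> gchoose n) * (- u) ^ n) sums (1 - u) powr \<alpha>"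
    using gen_binomial_real[of "- u" \<alpha>] assms by simp
  then have "(\<lambda>n. (\<alpha> gchoose n) * (- u) ^ n * u powr \<beta>) sums ((1 - u) powr \<alpha> * u powr \<beta>)"
    by (rule sums_mult2)
  moreover have "(\<alpha> gchoose n) * (- u) ^ n * u powr \<beta> = (\<alpha> gchoose n) * (-1) ^ n * u powr (real n + \<beta>)" for n
    using assms by (simp add: powr_add powr_realpow power_minus[of u])
  ultimately show ?thesis by simp
qed

lemma set_integrable_powr_complement:
  fixes F :: "real \<Rightarrow> real"
  assumes [measurable]: "F \<in> borel_measurable borel" "S \<in> sets borel"
    and lim: "(F \<longlongrightarrow> 1) at_top" and "bdd_below S"
    and bounds: "\<And>x. x \<in> S \<Longrightarrow> 0 < F x \<and> F x < 1" and "\<beta> \<le> p"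
    and int: "set_integrable lborel S (\<lambda>x. F x powr \<alpha> * (1 - F x) powr \<beta>)"
  shows "set_integrable lborel S (\<lambda>x. (1 - F x) powr p)"
proof -
  obtain a where a: "\<And>x. x \<in> S \<Longrightarrow> a \<le> x" using \<open>bdd_below S\<close> by (auto simp: bdd_below_def)
  obtain b where b: "\<And>x. b \<le> x \<Longrightarrow> 1/2 < F x"
    using order_tendstoD(1)[OF lim, of "1/2"] by (auto simp: eventually_at_top_linorder)
  define w where "w x = 2 powr \<bar>\<alpha>\<bar> * (indicator S x * (F x powr \<alpha> * (1 - F x) powr \<beta>))
      + 2 powr \<bar>p\<bar> * indicator {a..b} x" for x
  have "integrable lborel w"
    using int unfolding w_def set_integrable_def by (auto simp: emeasure_lborel_Icc_eq)
  moreover have "indicator S x * (1 - F x) powr p \<le> w x" for x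
  proof (cases "x \<in> S")
    case True
    then have u: "0 < 1 - F x" "1 - F x < 1" using bounds by auto
    show ?thesis
    proof (cases "1/2 \<le> F x")
      case True
      have "(1 - F x) powr p \<le> (1 - F x) powr \<beta>" using u \<open>\<beta> \<le> p\<close> by (intro powr_mono') auto
      also have "\<dots> \<le> (2 powr \<bar>\<alpha>\<bar> * F x powr \<alpha>) * (1 - F x) powr \<beta>"
      proof -
        have "1 \<le> 2 powr \<bar>\<alpha>\<bar> * F x powr \<alpha>"
          using True u by (intro one_le_two_powr_abs_mult_powr) auto
        from mult_right_mono[OF this, of "(1 - F x) powr \<beta>"] show ?thesis by simp
      qed
      finally show ?thesis using \<open>x \<in> S\<close> by (simp add: w_def mult.assoc add_increasing2)
    next
      case False
      then have "x \<in> {a..b}" using a[OF \<open>x \<in> S\<close>] b[of x] by force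
      moreover have "(1 - F x) powr p \<le> 2 powr \<bar>p\<bar>"
        using False u by (intro powr_le_two_powr_abs) auto
      ultimately show ?thesis using \<open>x \<in> S\<close> by (auto simp: w_def intro!: add_increasing)
    qed
  qed (simp add: w_def)
  moreover have "0 \<le> w x" for x by (simp add: w_def)
  moreover have "(\<lambda>x. indicator S x * (1 - F x) powr p) \<in> borel_measurable borel" by measurable
  ultimately show ?thesis unfolding set_integrable_def
    by (auto intro: Bochner_Integration.integrable_bound[of lborel w])
qed

lemma golomb_IG_equilibrium_pdf:
  assumes "\<And>x. F x \<le> 1" "0 < \<mu>"
  shows "\<mu> powr p * golomb_IG (equilibrium_pdf F \<mu>) r p
    = (LINT x : {x. 0 < x \<and> ereal x < r} | lborel. (1 - F x) powr p)"
proof -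
  have "golomb_IG (equilibrium_pdf F \<mu>) r p
      = (LINT x : {x. 0 < x \<and> ereal x < r} | lborel. (1 - F x) powr p / \<mu> powr p)"
    unfolding golomb_IG_def
    by (intro set_lebesgue_integral_cong) (auto simp: equilibrium_pdf_def powr_divide assms)
  then show ?thesis using assms(2) by simp
qed

lemma CIGF_binomial_series:
  assumes "mono F" and lim: "(F \<longlongrightarrow> 1) at_top" and "supp_left F \<noteq> -\<infinity>"
    and dom: "(\<alpha>, \<beta>) \<in> CIGF_dom F"
  shows "(\<lambda>n. (\<alpha> gchoose n) * (-1) ^ n
      * (LINT x : supp_interval F | lborel. (1 - F x) powr (real n + \<beta>))) sums CIGF F \<alpha> \<beta>"
proof -
  define S where "S = supp_interval F"
  define c where "c n = (\<alpha> gchoose n) * (-1 :: real) ^ n" for n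
  have F_meas [measurable]: "F \<in> borel_measurable borel"
    using \<open>mono F\<close> by (rule borel_measurable_mono)
  have bounds: "0 < F x \<and> F x < 1" if "x \<in> S" for x
    using mono_supp_interval_bounds[OF \<open>mono F\<close>] that by (simp add: S_def)
  have g_int: "set_integrable lborel S (\<lambda>x. F x powr \<alpha> * (1 - F x) powr \<beta>)"
    unfolding S_def using dom by (rule set_integrable_CIGF_dom[OF F_meas])
  obtain N :: nat where "\<alpha> < real N" using reals_Archimedean2 by blast
  then obtain s where "s \<noteq> 0" and sign: "\<And>n. N \<le> n \<Longrightarrow> 0 \<le> s * c n"
    using gbinomial_alternating_eventually_sign unfolding c_def by blast
  have "(\<lambda>n. \<integral>x. c n * (indicator S x * (1 - F x) powr (real n + \<beta>)) \<partial>lborel)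
      sums (\<integral>x. indicator S x * (F x powr \<alpha> * (1 - F x) powr \<beta>) \<partial>lborel)"
  proof (rule sums_integral_eventually_sign)
    show "integrable lborel (\<lambda>x. c n * (indicator S x * (1 - F x) powr (real n + \<beta>)))" for n
      using set_integrable_powr_complement[OF F_meas _ lim _ bounds _ g_int, of "real n + \<beta>"]
        bdd_below_supp_interval[OF \<open>supp_left F \<noteq> -\<infinity>\<close>]
      by (simp add: S_def set_integrable_def)
    show "(\<lambda>n. c n * (indicator S x * (1 - F x) powr (real n + \<beta>)))
        sums (indicator S x * (F x powr \<alpha> * (1 - F x) powr \<beta>))" for x
      using gen_binomial_real_complement[of "1 - F x" \<alpha> \<beta>] bounds[of x]
      by (cases "x \<in> S") (simp_all add: c_def)
    show "integrable lborel (\<lambda>x. indicator S x * (F x powr \<alpha> * (1 - F x) powr \<beta>))"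
      using g_int by (simp add: set_integrable_def)
    show "0 \<le> s * (c n * (indicator S x * (1 - F x) powr (real n + \<beta>)))" if "N \<le> n" for n x
      using sign[OF that] by (simp add: mult.assoc[symmetric])
  qed fact
  then show ?thesis by (simp add: CIGF_def set_lebesgue_integral_def S_def c_def)
qed

theorem proposition9:
  fixes M :: "'a measure" and X :: "'a \<Rightarrow> real" and F :: "real \<Rightarrow> real"
    and r :: ereal and \<mu> \<alpha> \<beta> :: real
  assumes "prob_space M"
    and "X \<in> borel_measurable M"
    and "F = cdf (distr M borel X)"
    and "AE \<omega> in M. X \<omega> \<ge> 0"
    and "supp_left F = 0"
    and "supp_right F = r"
    and "0 < r"
    and "integrable M X"
    and "\<mu> = integral\<^sup>L M X"
    and "0 < \<mu>"
    and "(\<alpha>, \<beta>) \<in> CIGF_dom F"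
  shows "(\<lambda>n. (\<alpha> gchoose n) * (-1) ^ n * \<mu> powr (real n + \<beta>)
            * golomb_IG (equilibrium_pdf F \<mu>) r (real n + \<beta>)) sums CIGF F \<alpha> \<beta>"
proof -
  interpret D: real_distribution "distr M borel X"
    using assms(1,2) by (simp add: prob_space.real_distribution_distr)
  have "mono F" using D.cdf_nondecreasing by (auto simp: assms(3) mono_def)
  moreover have "(F \<longlongrightarrow> 1) at_top" using D.cdf_lim_at_top_prob by (simp add: assms(3))
  ultimately have "(\<lambda>n. (\<alpha> gchoose n) * (-1) ^ n
      * (LINT x : supp_interval F | lborel. (1 - F x) powr (real n + \<beta>))) sums CIGF F \<alpha> \<beta>"
    using assms(5,11) by (intro CIGF_binomial_series) simp_all
  moreover have "supp_interval F = {x. 0 < x \<and> ereal x < r}"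
    using assms(5,6) by (simp add: supp_interval_def)
  moreover have "\<mu> powr p * golomb_IG (equilibrium_pdf F \<mu>) r p
      = (LINT x : {x. 0 < x \<and> ereal x < r} | lborel. (1 - F x) powr p)" for p
    using D.cdf_bounded_prob assms(3,10) by (intro golomb_IG_equilibrium_pdf) simp_all
  ultimately show ?thesis by (simp add: mult.assoc)
qed

end
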